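(* Let $\{X_1,X_2,\dots\}$ be a random dense countable subset of $(0,1)$ satisfying the independence condition, and such that for every Borel set $B\subset(0,1)$ of Lebesgue measure $0$ we have $B\cap\{X_1,X_2,\dots\}=\emptyset$ a.s. Then there exists a measurable function $r:(0,1)\to[0,\infty]$ such that for every Borel set $B\subset(0,1)$: - (a) if $\int_B r(x)\,dx=\infty$, then the set $B\cap\{X_1,X_2,\dots\}$ is infinite a.s.; - (b) if $\int_B r(x)\,dx<\infty$, then the set $B\cap\{X_1,X_2,\dots\}$ is finite a.s., and the number of its elements has the Poisson distribution with mean $\int_B r(x)\,dx$.
   Context: A random countable subset of $(0,1)$ is given by random variables $X_1,X_2,\dots:\Omega\to(0,1)$ on a probability space, the set being $\omega\mapsto\{X_1(\omega),X_2(\omega),\dots\}$. It is dense if this set is dense in $(0,1)$ for a.e. $\omega$. Two random countable sets $\{X_k\},\{Y_k\}$ are identically distributed if some probability measure $P$ on $(0,1)^\infty\times(0,1)^\infty$ has marginals the laws of $(X_k)_k$ and $(Y_k)_k$ and satisfies $\{x_1,x_2,\dots\}=\{y_1,y_2,\dots\}$ for $P$-a.a. $(x,y)$. Independence condition. For every $n\ge2$ and every $0=a_0<a_1<\dots<a_n=1$ there must exist random variables $Y_{i,j}$ ($i\le n$, $j\ge1$) on some probability space such that: - $\{Y_{i,j}\}$ is distributed like $\{X_k\}$; - $Y_{i,j}\in[a_{i-1},a_i)$ a.s.; - the sequences $(Y_{1,j})_j,\dots,(Y_{n,j})_j$ are independent. *)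

theory Defs
  imports "HOL-Probability.Probability"
begin

text \<open>A random countable set is represented by the law L of its indexing family y on this space;
  the set itself is y ` I.\<close>

abbreviation seqsp :: "'i set \<Rightarrow> ('i \<Rightarrow> real) measure" where
  "seqsp I \<equiv> PiM I (\<lambda>_. borel)"

definition rcs_ident_distr ::
  "'i set \<Rightarrow> ('i \<Rightarrow> real) measure \<Rightarrow> 'j set \<Rightarrow> ('j \<Rightarrow> real) measure \<Rightarrow> bool" where
  "rcs_ident_distr I L J L' \<longleftrightarrow>
     (\<exists>P. prob_space P \<and> sets P = sets (seqsp I \<Otimes>\<^sub>M seqsp J) \<and>
          distr P (seqsp I) fst = L \<and> distr P (seqsp J) snd = L' \<and>
          (AE p in P. fst p ` I = snd p ` J))"

definition seq_law :: "'a measure \<Rightarrow> (nat \<Rightarrow> 'a \<Rightarrow> real) \<Rightarrow> (nat \<Rightarrow> real) measure" where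
  "seq_law M X = distr M (seqsp UNIV) (\<lambda>\<omega> k. X k \<omega>)"

text \<open>The random variables Y_{i,j} (i < n, j in nat; the paper's index
  i+1) on some probability space are represented by their joint law Q on the sequence space
  indexed by {..<n} \<times> UNIV.\<close>

definition independence_condition :: "'a measure \<Rightarrow> (nat \<Rightarrow> 'a \<Rightarrow> real) \<Rightarrow> bool" where
  "independence_condition M X \<longleftrightarrow>
     (\<forall>n::nat. \<forall>a::nat \<Rightarrow> real.
        n \<ge> 2 \<and> a 0 = 0 \<and> a n = 1 \<and> (\<forall>i<n. a i < a (Suc i)) \<longrightarrow>
        (\<exists>Q. prob_space Q \<and> sets Q = sets (seqsp ({..<n} \<times> (UNIV::nat set))) \<and>
             rcs_ident_distr ({..<n} \<times> UNIV) Q UNIV (seq_law M X) \<and>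
             (AE y in Q. \<forall>i<n. \<forall>j. y (i, j) \<in> {a i..<a (Suc i)}) \<and>
             prob_space.indep_vars Q (\<lambda>_. seqsp (UNIV::nat set)) (\<lambda>i y. (\<lambda>j. y (i, j))) {..<n}))"

end

theory Submission
  imports Defs
begin

text \<open>
  Cut \<open>(0,1)\<close> into the \<open>2^k\<close> dyadic cells of level \<open>k\<close> and let \<open>q\<^sub>k\<^sub>j\<close> be the probability that
  the random set meets \<open>B \<inter> cell\<^sub>k\<^sub>j\<close>. By the independence condition these events are independent,
  so the number \<open>N\<^sub>k\<close> of cells of level \<open>k\<close> containing points of \<open>B\<close> has generating function
  \<open>\<Prod>\<^sub>j (1 - (1 - s) q\<^sub>k\<^sub>j)\<close>, and the probability \<open>p(B)\<close> that \<open>B\<close> contains no point equals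
  \<open>\<Prod>\<^sub>j (1 - q\<^sub>k\<^sub>j)\<close>. If \<open>p(B) > 0\<close>, then \<open>B\<close> contains a.s. finitely many points; as there are no fixed
  atoms, \<open>max\<^sub>j q\<^sub>k\<^sub>j \<rightarrow> 0\<close>, the products tend to \<open>p(B) powr (1 - s)\<close>, and \<open>N\<^sub>k\<close> is eventually the number of
  points in \<open>B\<close>, which is therefore Poisson with mean \<open>- ln p(B)\<close>. The expected numbers of points form
  a measure that charges no Lebesgue null set, and \<open>r\<close> is its density. If \<open>\<integral>\<^sub>B r = \<infinity>\<close>, then either
  \<open>r = \<infinity>\<close> on a set of positive measure, each piece of positive measure of which is hit almost surely,
  or \<open>B\<close> contains sets of finite but arbitrarily large mean, whose Poisson counts exceed every bound.
\<close>

section \<open>Dyadic cells\<close>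

definition dyadic_cell :: "nat \<Rightarrow> nat \<Rightarrow> real set" where
  "dyadic_cell k j = {real j / 2^k ..< (real j + 1) / 2^k}"

definition dyadic_index :: "nat \<Rightarrow> real \<Rightarrow> nat" where
  "dyadic_index k x = nat \<lfloor>x * 2^k\<rfloor>"

lemma dyadic_cell_borel[measurable]: "dyadic_cell k j \<in> sets borel"
  unfolding dyadic_cell_def by simp

lemma mem_dyadic_cell_iff:
  assumes "0 \<le> x"
  shows "x \<in> dyadic_cell k j \<longleftrightarrow> dyadic_index k x = j"
proof -
  have "x \<in> dyadic_cell k j \<longleftrightarrow> real j \<le> x * 2^k \<and> x * 2^k < real j + 1"
    unfolding dyadic_cell_def by (auto simp: field_simps)
  also have "\<dots> \<longleftrightarrow> \<lfloor>x * 2^k\<rfloor> = int j"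
    by (auto simp: floor_eq_iff)
  finally show ?thesis
    unfolding dyadic_index_def using assms by (auto simp: nat_eq_iff)
qed

lemma dyadic_index_less:
  assumes "0 \<le> x" "x < 1"
  shows "dyadic_index k x < 2^k"
proof -
  have "\<lfloor>x * 2^k\<rfloor> < 2^k"
    using assms by (simp add: floor_less_iff)
  then show ?thesis
    unfolding dyadic_index_def using assms by (simp add: nat_less_iff)
qed

lemma disjoint_family_dyadic_cell: "disjoint_family (dyadic_cell k)"
  unfolding disjoint_family_on_def
proof (intro ballI impI)
  fix i j :: nat assume "i \<noteq> j"
  have "dyadic_index k x = i" if "x \<in> dyadic_cell k i" for x i
  proof -
    have "0 \<le> real i / 2^k" by simp
    then have "0 \<le> x" using that unfolding dyadic_cell_def atLeastLessThan_iff by linarith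
    then show ?thesis using that mem_dyadic_cell_iff by blast
  qed
  then show "dyadic_cell k i \<inter> dyadic_cell k j = {}"
    using \<open>i \<noteq> j\<close> by blast
qed

lemma Int_dyadic_cells_cover:
  assumes "A \<subseteq> {0..<1}"
  shows "A = (\<Union>j<2^k. A \<inter> dyadic_cell k j)"
proof -
  have "x \<in> dyadic_cell k (dyadic_index k x)" "dyadic_index k x < 2^k" if "x \<in> A" for x
    using assms that mem_dyadic_cell_iff dyadic_index_less by auto
  then show ?thesis by blast
qed

lemma emeasure_dyadic_cell: "emeasure lborel (dyadic_cell k j) = ennreal (1 / 2^k)"
proof -
  have "real j / 2^k \<le> (real j + 1) / 2^k"
    by (simp add: divide_right_mono)
  then show ?thesis
    unfolding dyadic_cell_def by (simp flip: diff_divide_distrib)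
qed

lemma dyadic_cell_subset_ball:
  assumes "1 / 2^k < e"
  shows "dyadic_cell k j \<subseteq> ball (real j / 2^k) e"
  using assms unfolding dyadic_cell_def by (auto simp: dist_real_def add_divide_distrib)

lemma eventually_dyadic_index_neq:
  assumes "0 \<le> x" "0 \<le> y" "x \<noteq> y"
  shows "eventually (\<lambda>k. dyadic_index k x \<noteq> dyadic_index k y) sequentially"
proof -
  obtain K where K: "1 / \<bar>x - y\<bar> < 2^K"
    using real_arch_pow[of 2 "1 / \<bar>x - y\<bar>"] by auto
  show ?thesis
  proof (rule eventually_sequentiallyI[of K])
    fix k assume "K \<le> k"
    then have "1 / \<bar>x - y\<bar> < 2^k"
      using K power_increasing[of K k "2::real"] by linarith
    then have "1 < \<bar>x - y\<bar> * 2^k"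
      using assms(3) by (simp add: divide_less_eq mult.commute)
    also have "\<dots> = \<bar>x * 2^k - y * 2^k\<bar>"
      by (simp add: abs_mult flip: left_diff_distrib)
    finally have far: "1 < \<bar>x * 2^k - y * 2^k\<bar>" .
    show "dyadic_index k x \<noteq> dyadic_index k y"
    proof
      assume "dyadic_index k x = dyadic_index k y"
      then have "\<lfloor>x * 2^k\<rfloor> = \<lfloor>y * 2^k\<rfloor>"
        unfolding dyadic_index_def using assms(1,2) by (simp add: nat_eq_iff2)
      then show False
        using far floor_correct[of "x * 2^k"] floor_correct[of "y * 2^k"] by linarith
    qed
  qed
qed

lemma eventually_inj_on_dyadic_index:
  assumes "finite F" "F \<subseteq> {0..}"
  shows "eventually (\<lambda>k. inj_on (dyadic_index k) F) sequentially"
proof -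
  have "eventually (\<lambda>k. \<forall>p \<in> F \<times> F. fst p \<noteq> snd p \<longrightarrow> dyadic_index k (fst p) \<noteq> dyadic_index k (snd p))
          sequentially"
  proof (rule eventually_ball_finite)
    show "finite (F \<times> F)" using assms(1) by simp
    show "\<forall>p \<in> F \<times> F. eventually (\<lambda>k. fst p \<noteq> snd p \<longrightarrow> dyadic_index k (fst p) \<noteq> dyadic_index k (snd p))
            sequentially"
    proof
      fix p assume "p \<in> F \<times> F"
      then have "0 \<le> fst p" "0 \<le> snd p" using assms(2) by auto
      then show "eventually (\<lambda>k. fst p \<noteq> snd p \<longrightarrow> dyadic_index k (fst p) \<noteq> dyadic_index k (snd p))
          sequentially"
        using eventually_dyadic_index_neq by (cases "fst p = snd p") simp_all
    qed
  qed
  then show ?thesis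
    by eventually_elim (auto simp: inj_on_def)
qed

lemma emeasure_le_card_dyadic_cells:
  assumes [measurable]: "A \<in> sets borel" and "A \<subseteq> {0..<1}"
  shows "emeasure lborel A \<le> ennreal (card {j \<in> {..<2^k}. 0 < emeasure lborel (A \<inter> dyadic_cell k j)} / 2^k)"
    (is "_ \<le> ennreal (card ?J / _)")
proof -
  have "emeasure lborel A = (\<Sum>j<2^k. emeasure lborel (A \<inter> dyadic_cell k j))"
  proof (subst Int_dyadic_cells_cover[OF assms(2)], rule sum_emeasure[symmetric])
    show "disjoint_family_on (\<lambda>j. A \<inter> dyadic_cell k j) {..<2^k}"
      using disjoint_family_dyadic_cell[of k] by (auto simp: disjoint_family_on_def)
  qed auto
  also have "\<dots> = (\<Sum>j\<in>?J. emeasure lborel (A \<inter> dyadic_cell k j))"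
    by (rule sum.mono_neutral_right) (auto simp: not_less zero_less_iff_neq_zero)
  also have "\<dots> \<le> (\<Sum>j\<in>?J. ennreal (1 / 2^k))"
    by (intro sum_mono order_trans[OF emeasure_mono emeasure_dyadic_cell[THEN eq_refl]]) auto
  also have "\<dots> = ennreal (card ?J / 2^k)"
    by (simp add: ennreal_of_nat_eq_real_of_nat flip: ennreal_mult')
  finally show ?thesis .
qed

lemma ex_many_dyadic_cells_of_positive_measure:
  assumes [measurable]: "A \<in> sets borel" and "A \<subseteq> {0..<1}" and "0 < emeasure lborel A"
  obtains k where "m \<le> card {j \<in> {..<2^k}. 0 < emeasure lborel (A \<inter> dyadic_cell k j)}"
proof -
  have "emeasure lborel A \<le> emeasure lborel {0..<1::real}"
    using assms(2) by (intro emeasure_mono) auto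
  then obtain L where L: "emeasure lborel A = ennreal L" "0 < L"
    using assms(3) by (cases "emeasure lborel A") (auto simp: top_unique)
  obtain k where "real m / L < 2^k"
    using real_arch_pow[of 2 "real m / L"] by auto
  then have "real m < L * 2^k"
    using L(2) by (simp add: field_simps)
  also have "L * 2^k \<le> card {j \<in> {..<2^k}. 0 < emeasure lborel (A \<inter> dyadic_cell k j)}"
    using emeasure_le_card_dyadic_cells[OF assms(1,2), of k] L by (simp add: ennreal_le_iff field_simps)
  finally show ?thesis
    by (intro that[of k]) simp
qed

lemma ennreal_eq_top_if_of_nat_le:
  assumes "\<And>n::nat. of_nat n \<le> x"
  shows "x = (\<top> :: ennreal)"
proof (rule ccontr)
  assume "x \<noteq> \<top>"
  then obtain n :: nat where "x < of_nat n"
    using ennreal_Ex_less_of_nat top.not_eq_extremum by blast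
  with assms[of n] show False
    by simp
qed

lemma tendsto_sum_ln_one_minus_plus_sum:
  fixes a :: "nat \<Rightarrow> nat \<Rightarrow> real" and N :: "nat \<Rightarrow> nat"
  assumes nonneg: "\<And>k j. 0 \<le> a k j"
    and bounded: "eventually (\<lambda>k. (\<Sum>j<N k. a k j) \<le> C) sequentially"
    and small: "\<And>e. 0 < e \<Longrightarrow> eventually (\<lambda>k. \<forall>j<N k. a k j \<le> e) sequentially"
  shows "(\<lambda>k. (\<Sum>j<N k. ln (1 - a k j)) + (\<Sum>j<N k. a k j)) \<longlonglongrightarrow> 0"
proof (rule tendsto_iff[THEN iffD2], intro allI impI)
  \<comment> \<open>\<open>- a - 2 a\<^sup>2 \<le> ln (1 - a) \<le> - a\<close> for \<open>0 \<le> a \<le> 1/2\<close>, and \<open>\<Sum> a\<^sup>2 \<le> (max a) * \<Sum> a\<close>.\<close>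
  fix r :: real assume "0 < r"
  define e where "e = min (1/2) (r / (2 * (\<bar>C\<bar> + 1)))"
  have "e \<le> 1/2"
    unfolding e_def by (rule min.cobounded1)
  moreover have "0 < e"
    using \<open>0 < r\<close> by (simp add: e_def)
  ultimately have e: "0 < e" "e \<le> 1/2" by simp_all
  have "e \<le> r / (2 * (\<bar>C\<bar> + 1))"
    by (simp add: e_def)
  then have e_r: "2 * e * (\<bar>C\<bar> + 1) \<le> r"
    by (simp add: pos_le_divide_eq mult_ac)
  from small[OF e(1)] bounded
  show "eventually (\<lambda>k. dist ((\<Sum>j<N k. ln (1 - a k j)) + (\<Sum>j<N k. a k j)) 0 < r) sequentially"
  proof eventually_elim
    case (elim k)
    have a_le: "a k j \<le> 1/2" "a k j < 1" if "j < N k" for j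
      using elim(1) that e(2) by fastforce+
    have "(\<Sum>j<N k. ln (1 - a k j)) \<le> (\<Sum>j<N k. - a k j)"
      using a_le nonneg by (intro sum_mono ln_one_minus_pos_upper_bound) (auto simp: less_le_trans)
    then have upper: "(\<Sum>j<N k. ln (1 - a k j)) + (\<Sum>j<N k. a k j) \<le> 0"
      by (simp add: sum_negf)
    have "(\<Sum>j<N k. - a k j - 2 * (a k j)\<^sup>2) \<le> (\<Sum>j<N k. ln (1 - a k j))"
      using a_le nonneg by (intro sum_mono ln_one_minus_pos_lower_bound) auto
    moreover have "(\<Sum>j<N k. (a k j)\<^sup>2) \<le> (\<Sum>j<N k. e * a k j)"
      using elim(1) nonneg by (intro sum_mono) (simp add: power2_eq_square mult_right_mono)
    moreover have "(\<Sum>j<N k. e * a k j) \<le> e * \<bar>C\<bar>"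
      using elim(2) e(1) by (simp add: sum_distrib_left[symmetric] mult_left_mono)
    ultimately have lower: "- 2 * e * \<bar>C\<bar> \<le> (\<Sum>j<N k. ln (1 - a k j)) + (\<Sum>j<N k. a k j)"
      by (simp add: sum_subtractf sum_negf sum_distrib_left[symmetric])
    have "2 * e * \<bar>C\<bar> < r"
      using e(1) e_r by (simp add: algebra_simps)
    with upper lower show ?case
      by (simp add: dist_real_def)
  qed
qed

lemma powser_coeffs_eq_0:
  fixes c :: "nat \<Rightarrow> real"
  assumes r: "0 < r" and abs_summable: "summable (\<lambda>n. \<bar>c n\<bar> * r ^ n)"
    and sums_0: "\<And>x. 0 < x \<Longrightarrow> x < r \<Longrightarrow> (\<lambda>n. c n * x ^ n) sums 0"
  shows "c n = 0"
proof (induction n rule: less_induct)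
  case (less n)
  define g where "g x = (\<Sum>m. c (m + n) * x ^ m)" for x :: real
  have "summable (\<lambda>m. \<bar>c (m + n)\<bar> * r ^ (m + n) / r ^ n)"
    using abs_summable by (intro summable_divide) (subst summable_iff_shift)
  then have shifted: "summable (\<lambda>m. \<bar>c (m + n)\<bar> * r ^ m)"
    using r by (simp add: power_add)
  have sums_g: "(\<lambda>m. c (m + n) * x ^ m) sums g x" if "norm x < r" for x
  proof -
    have "summable (\<lambda>m. norm (c (m + n) * x ^ m))"
    proof (rule summable_comparison_test'[where N=0, OF shifted])
      fix m
      have "\<bar>x\<bar> ^ m \<le> r ^ m"
        using that by (intro power_mono) auto
      then show "norm (norm (c (m + n) * x ^ m)) \<le> \<bar>c (m + n)\<bar> * r ^ m"
        by (simp add: abs_mult power_abs mult_left_mono)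
    qed
    then show ?thesis
      unfolding g_def by (rule summable_sums[OF summable_norm_cancel])
  qed
  have "g x = 0" if "0 < x" "x < r" for x
  proof -
    have "(\<lambda>m. c (m + n) * x ^ (m + n)) sums 0"
      using sums_zero_iff_shift[of n "\<lambda>i. c i * x ^ i"] less.IH sums_0[OF that] by simp
    then have "(\<lambda>m. x ^ n * (c (m + n) * x ^ m)) sums 0"
      by (simp add: power_add mult_ac)
    then have "(\<lambda>m. c (m + n) * x ^ m) sums 0"
      using sums_mult_D[of "x ^ n"] that by fastforce
    then show ?thesis
      using sums_g[of x] that sums_unique2 by auto
  qed
  then have "eventually (\<lambda>x. g x = 0) (at_right 0)"
    unfolding eventually_at_right_field using r by blast
  then have "(g \<longlongrightarrow> 0) (at_right 0)"
    by (rule tendsto_eventually)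
  moreover have "(g \<longlongrightarrow> c n) (at_right 0)"
    using powser_limit_0[OF r sums_g] by (simp add: filterlim_at_split)
  ultimately show "c n = 0"
    using tendsto_unique[OF trivial_limit_at_right_real] by blast
qed

lemma poisson_pgf_sums:
  fixes \<mu> s :: real
  shows "(\<lambda>m. exp (- \<mu>) * \<mu> ^ m / fact m * s ^ m) sums exp (- \<mu> * (1 - s))"
proof -
  have "(\<lambda>m. exp (- \<mu>) * ((\<mu> * s) ^ m / fact m)) sums (exp (- \<mu>) * exp (\<mu> * s))"
    using exp_converges[of "\<mu> * s"] by (intro sums_mult) (simp add: divide_inverse mult.commute)
  then show ?thesis
    by (simp add: power_mult_distrib mult_exp_exp algebra_simps)
qed

lemma poisson_cdf_tendsto_0: "((\<lambda>\<mu>::real. \<Sum>i\<le>m. exp (- \<mu>) * \<mu> ^ i / fact i) \<longlongrightarrow> 0) at_top"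
proof -
  have "((\<lambda>\<mu>::real. \<Sum>i\<le>m. (\<mu> ^ i / exp \<mu>) / fact i) \<longlongrightarrow> (\<Sum>i\<le>m. 0 / fact i)) at_top"
    by (intro tendsto_sum tendsto_divide tendsto_power_div_exp_0 tendsto_const) auto
  then show ?thesis
    by (simp add: exp_minus field_simps)
qed

lemma ex_enn2real_ge_if_SUP_eq_infinity:
  fixes f :: "nat \<Rightarrow> ennreal"
  assumes "(SUP n. f n) = \<infinity>" and "\<And>n. f n < \<infinity>"
  obtains n where "T \<le> enn2real (f n)"
proof -
  have "ennreal T < (SUP n. f n)"
    unfolding assms(1) by simp
  then obtain n where "ennreal T < f n"
    by (auto simp: less_SUP_iff)
  then have "enn2real (ennreal T) \<le> enn2real (f n)"
    using assms(2)[of n] by (intro enn2real_mono) auto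
  moreover have "T \<le> enn2real (ennreal T)"
    by (cases "0 \<le> T") (auto simp: ennreal_neg)
  ultimately show ?thesis
    by (intro that[of n]) (rule order_trans)
qed

lemma set_nn_integral_eq_infinity:
  fixes r :: "real \<Rightarrow> ennreal"
  assumes "A \<in> sets borel" "\<And>x. x \<in> A \<Longrightarrow> r x = \<infinity>" "0 < emeasure lborel A"
  shows "set_nn_integral lborel A r = \<infinity>"
proof -
  have "set_nn_integral lborel A r = (\<integral>\<^sup>+x. \<infinity> * indicator A x \<partial>lborel)"
    using assms(2) by (intro nn_integral_cong) (auto simp: indicator_def)
  also have "\<dots> = \<infinity> * emeasure lborel A"
    using assms(1) by (intro nn_integral_cmult_indicator) simp
  finally show ?thesis
    using assms(3) by (simp add: ennreal_top_mult)
qed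

lemma set_nn_integral_le_const_mult_emeasure:
  fixes r :: "real \<Rightarrow> ennreal"
  assumes "A \<in> sets borel" "\<And>x. x \<in> A \<Longrightarrow> r x \<le> c"
  shows "set_nn_integral lborel A r \<le> c * emeasure lborel A"
proof -
  have "set_nn_integral lborel A r \<le> (\<integral>\<^sup>+x. c * indicator A x \<partial>lborel)"
    using assms(2) by (intro nn_integral_mono) (auto simp: indicator_def)
  also have "\<dots> = c * emeasure lborel A"
    using assms(1) by (intro nn_integral_cmult_indicator) simp
  finally show ?thesis .
qed

lemma (in prob_space) sums_prob_eq_times_power:
  assumes [measurable]: "N \<in> measurable M (count_space UNIV)" and s: "0 \<le> s" "s \<le> 1"
  shows "(\<lambda>m. prob {\<omega> \<in> space M. N \<omega> = m} * s ^ m) sums (\<integral>\<omega>. s ^ N \<omega> \<partial>M)"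
proof -
  have "(\<integral>\<^sup>+\<omega>. ennreal (s ^ N \<omega>) \<partial>M) =
        (\<integral>\<^sup>+\<omega>. (\<Sum>m. ennreal (s ^ m) * indicator {\<omega> \<in> space M. N \<omega> = m} \<omega>) \<partial>M)"
  proof (rule nn_integral_cong)
    fix \<omega> assume "\<omega> \<in> space M"
    then show "ennreal (s ^ N \<omega>) = (\<Sum>m. ennreal (s ^ m) * indicator {\<omega> \<in> space M. N \<omega> = m} \<omega>)"
      by (subst suminf_finite[of "{N \<omega>}"]) (auto simp: indicator_def)
  qed
  also have "\<dots> = (\<Sum>m. ennreal (s ^ m) * emeasure M {\<omega> \<in> space M. N \<omega> = m})"
    by (subst nn_integral_suminf) (auto intro!: suminf_cong nn_integral_cmult_indicator)
  also have "\<dots> = (\<Sum>m. ennreal (prob {\<omega> \<in> space M. N \<omega> = m} * s ^ m))"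
    using s by (simp add: emeasure_eq_measure ennreal_mult' mult.commute)
  finally have eq: "(\<integral>\<^sup>+\<omega>. ennreal (s ^ N \<omega>) \<partial>M) = (\<Sum>m. ennreal (prob {\<omega> \<in> space M. N \<omega> = m} * s ^ m))" .
  have "(\<lambda>m. ennreal (prob {\<omega> \<in> space M. N \<omega> = m} * s ^ m)) sums (\<integral>\<^sup>+\<omega>. ennreal (s ^ N \<omega>) \<partial>M)"
    unfolding eq by (rule summable_sums[OF summableI])
  moreover have "(\<integral>\<^sup>+\<omega>. ennreal (s ^ N \<omega>) \<partial>M) = ennreal (\<integral>\<omega>. s ^ N \<omega> \<partial>M)"
    using s by (intro nn_integral_eq_integral integrable_const_bound[where B=1]) (auto simp: power_le_one)
  ultimately have "(\<lambda>m. ennreal (prob {\<omega> \<in> space M. N \<omega> = m} * s ^ m)) sums ennreal (\<integral>\<omega>. s ^ N \<omega> \<partial>M)"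
    by simp
  moreover have "0 \<le> (\<integral>\<omega>. s ^ N \<omega> \<partial>M)"
    using s by (simp add: integral_nonneg)
  ultimately show ?thesis
    using s by (simp add: sums_ennreal)
qed

lemma (in prob_space) prob_eq_poisson_if_pgf:
  assumes [measurable]: "N \<in> measurable M (count_space UNIV)"
    and pgf: "\<And>s. 0 < s \<Longrightarrow> s < 1 \<Longrightarrow> (\<integral>\<omega>. s ^ N \<omega> \<partial>M) = exp (- \<mu> * (1 - s))"
    and "0 \<le> \<mu>"
  shows "prob {\<omega> \<in> space M. N \<omega> = m} = exp (- \<mu>) * \<mu> ^ m / fact m"
proof -
  define p where "p m = prob {\<omega> \<in> space M. N \<omega> = m}" for m
  define q where "q m = exp (- \<mu>) * \<mu> ^ m / fact m" for m
  have p_sums: "(\<lambda>m. p m * s ^ m) sums exp (- \<mu> * (1 - s))" if "0 < s" "s < 1" for s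
    using sums_prob_eq_times_power[of N s] pgf[OF that] that by (simp add: p_def)
  have q_sums: "(\<lambda>m. q m * s ^ m) sums exp (- \<mu> * (1 - s))" for s
    using poisson_pgf_sums[of \<mu> s] by (simp add: q_def)
  have "summable (\<lambda>m. p m * (1/2) ^ m + q m * (1/2) ^ m)"
    using p_sums[of "1/2"] q_sums[of "1/2"] by (intro summable_add) (auto dest: sums_summable)
  then have "summable (\<lambda>m. \<bar>p m - q m\<bar> * (1/2) ^ m)"
  proof (rule summable_comparison_test'[where N=0])
    fix m
    have "0 \<le> p m" "0 \<le> q m"
      using \<open>0 \<le> \<mu>\<close> by (simp_all add: p_def q_def)
    then show "norm (\<bar>p m - q m\<bar> * (1/2) ^ m) \<le> p m * (1/2) ^ m + q m * (1/2) ^ m"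
      by (simp add: abs_mult flip: distrib_right)
  qed
  moreover have "(\<lambda>m. (p m - q m) * s ^ m) sums 0" if "0 < s" "s < 1/2" for s
  proof -
    have "s < 1" using that by simp
    then show ?thesis
      using sums_diff[OF p_sums[of s] q_sums[of s]] that by (simp add: left_diff_distrib)
  qed
  ultimately have "p m - q m = 0"
    by (intro powser_coeffs_eq_0[where r="1/2"]) auto
  then show ?thesis
    by (simp add: p_def q_def)
qed

lemma indep_vars_if_distr_eq:
  assumes M: "prob_space M" and N: "prob_space N" and "I \<noteq> {}"
    and X[measurable]: "\<And>i. i \<in> I \<Longrightarrow> X i \<in> measurable M (M' i)"
    and Y[measurable]: "\<And>i. i \<in> I \<Longrightarrow> Y i \<in> measurable N (M' i)"
    and eq: "distr M (\<Pi>\<^sub>M i\<in>I. M' i) (\<lambda>\<omega>. \<lambda>i\<in>I. X i \<omega>) = distr N (\<Pi>\<^sub>M i\<in>I. M' i) (\<lambda>\<omega>. \<lambda>i\<in>I. Y i \<omega>)"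
    and indep: "prob_space.indep_vars N M' Y I"
  shows "prob_space.indep_vars M M' X I"
proof -
  have marginal: "distr M (M' i) (X i) = distr N (M' i) (Y i)" if "i \<in> I" for i
  proof -
    have "distr M (M' i) (X i) = distr (distr M (\<Pi>\<^sub>M i\<in>I. M' i) (\<lambda>\<omega>. \<lambda>i\<in>I. X i \<omega>)) (M' i) (\<lambda>x. x i)"
      using that by (subst distr_distr) (auto intro!: distr_cong measurable_restrict)
    also have "\<dots> = distr N (M' i) (Y i)"
      unfolding eq using that by (subst distr_distr) (auto intro!: distr_cong measurable_restrict)
    finally show ?thesis .
  qed
  have "distr M (\<Pi>\<^sub>M i\<in>I. M' i) (\<lambda>\<omega>. \<lambda>i\<in>I. X i \<omega>) = (\<Pi>\<^sub>M i\<in>I. distr M (M' i) (X i))"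
    using prob_space.indep_vars_iff_distr_eq_PiM'[OF N \<open>I \<noteq> {}\<close> Y] indep eq
    by (simp add: marginal cong: PiM_cong)
  then show ?thesis
    using prob_space.indep_vars_iff_distr_eq_PiM'[OF M \<open>I \<noteq> {}\<close> X] by simp
qed

section \<open>Random countable sets\<close>

lemma borel_measurable_of_bool_image_meets:
  fixes J :: "'j set" and C :: "real set"
  assumes "countable J" and C: "C \<in> sets borel"
  shows "(\<lambda>y. of_bool (y ` J \<inter> C \<noteq> {}) :: real) \<in> borel_measurable (seqsp J)"
proof -
  define S where "S = (\<Union>j\<in>J. (\<lambda>y. y j) -` C \<inter> space (seqsp J))"
  have "(\<lambda>y. y j) -` C \<inter> space (seqsp J) \<in> sets (seqsp J)" if "j \<in> J" for j
    using measurable_sets[OF measurable_component_singleton[OF that] C] .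
  then have "S \<in> sets (seqsp J)"
    unfolding S_def using \<open>countable J\<close> by (intro sets.countable_UN'') auto
  then have "indicator S \<in> borel_measurable (seqsp J)"
    by simp
  then show ?thesis
    by (rule measurable_cong[THEN iffD1, rotated]) (auto simp: S_def indicator_def)
qed

lemma rcs_ident_distr_distr_eq:
  assumes "rcs_ident_distr I L J L'"
    and [measurable]: "(\<lambda>y. \<Phi> (y ` I)) \<in> measurable (seqsp I) N"
      "(\<lambda>y. \<Phi> (y ` J)) \<in> measurable (seqsp J) N"
  shows "distr L N (\<lambda>y. \<Phi> (y ` I)) = distr L' N (\<lambda>y. \<Phi> (y ` J))"
proof -
  obtain P where P: "sets P = sets (seqsp I \<Otimes>\<^sub>M seqsp J)"
      "distr P (seqsp I) fst = L" "distr P (seqsp J) snd = L'" "AE p in P. fst p ` I = snd p ` J"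
    using assms(1) unfolding rcs_ident_distr_def by blast
  have [measurable]: "fst \<in> measurable P (seqsp I)" "snd \<in> measurable P (seqsp J)"
    using measurable_cong_sets[OF P(1) refl] by auto
  have "distr L N (\<lambda>y. \<Phi> (y ` I)) = distr P N (\<lambda>p. \<Phi> (fst p ` I))"
    unfolding P(2)[symmetric] by (subst distr_distr) (auto simp: comp_def)
  also have "\<dots> = distr P N (\<lambda>p. \<Phi> (snd p ` J))"
    using P(4) by (intro distr_cong_AE) auto
  also have "\<dots> = distr L' N (\<lambda>y. \<Phi> (y ` J))"
    unfolding P(3)[symmetric] by (subst distr_distr) (auto simp: comp_def)
  finally show ?thesis .
qed

lemma partition_index_unique:
  fixes a :: "nat \<Rightarrow> real"
  assumes incr: "\<forall>i<n. a i < a (Suc i)" and "i < n" "i' < n"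
    and "x \<in> {a i..<a (Suc i)}" "x \<in> {a i'..<a (Suc i')}"
  shows "i = i'"
proof -
  have step: "a (min m n) \<le> a (min (Suc m) n)" for m
    using incr by (cases "m < n") (auto simp: min_def less_imp_le)
  have mono: "a i \<le> a j" if "i \<le> j" "j \<le> n" for i j
    using lift_Suc_mono_le[of "\<lambda>j. a (min j n)", OF step that(1)] that by simp
  show ?thesis
  proof (rule ccontr)
    assume "i \<noteq> i'"
    then consider "Suc i \<le> i'" | "Suc i' \<le> i" by linarith
    then show False
      using mono[of "Suc i" i'] mono[of "Suc i'" i] assms(2-5) by cases auto
  qed
qed

lemma image_blocks_Int_nonempty_iff:
  fixes a :: "nat \<Rightarrow> real" and y :: "nat \<times> nat \<Rightarrow> real"
  assumes incr: "\<forall>i<n. a i < a (Suc i)" and blocks: "\<forall>i<n. \<forall>j. y (i, j) \<in> {a i..<a (Suc i)}"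
    and "i < n" and C: "C \<subseteq> {a i..<a (Suc i)}"
  shows "y ` ({..<n} \<times> UNIV) \<inter> C \<noteq> {} \<longleftrightarrow> range (\<lambda>j. y (i, j)) \<inter> C \<noteq> {}"
proof
  assume "y ` ({..<n} \<times> UNIV) \<inter> C \<noteq> {}"
  then obtain i' j where "i' < n" "y (i', j) \<in> C"
    by auto
  moreover have "i' = i"
    using partition_index_unique[OF incr \<open>i < n\<close> \<open>i' < n\<close>, of "y (i', j)"] C blocks
      \<open>i' < n\<close> \<open>y (i', j) \<in> C\<close> by auto
  ultimately show "range (\<lambda>j. y (i, j)) \<inter> C \<noteq> {}"
    by auto
qed (use \<open>i < n\<close> in auto)

lemma sigma_algebra_borel_UNIV: "sigma_algebra UNIV (sets (borel :: real measure))"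
  using sets.sigma_algebra_axioms[of borel] by simp

locale random_countable_set = prob_space M
  for M :: "'a measure" and X :: "nat \<Rightarrow> 'a \<Rightarrow> real" +
  assumes measurable_X[measurable]: "\<And>k. X k \<in> borel_measurable M"
    and X_in_unit_interval: "\<And>k \<omega>. \<omega> \<in> space M \<Longrightarrow> X k \<omega> \<in> {0<..<1}"
begin

definition points :: "'a \<Rightarrow> real set" where
  "points \<omega> = range (\<lambda>k. X k \<omega>)"

definition hits :: "real set \<Rightarrow> 'a set" where
  "hits C = {\<omega> \<in> space M. \<exists>k. X k \<omega> \<in> C}"

definition npoints :: "real set \<Rightarrow> 'a \<Rightarrow> ennreal" where
  "npoints B \<omega> = emeasure (count_space UNIV) (B \<inter> points \<omega>)"

definition ncells :: "real set \<Rightarrow> nat \<Rightarrow> 'a \<Rightarrow> nat" where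
  "ncells B k \<omega> = card (dyadic_index k ` (B \<inter> points \<omega>))"

definition cell_prob :: "real set \<Rightarrow> nat \<Rightarrow> nat \<Rightarrow> real" where
  "cell_prob B k j = prob (hits (B \<inter> dyadic_cell k j))"

definition void_prob :: "real set \<Rightarrow> real" where
  "void_prob B = prob (space M - hits B)"

definition intensity :: "real measure" where
  "intensity = measure_of UNIV (sets borel) (\<lambda>B. \<integral>\<^sup>+\<omega>. npoints B \<omega> \<partial>M)"

lemma measurable_X_seq[measurable]: "(\<lambda>\<omega> k. X k \<omega>) \<in> measurable M (seqsp UNIV)"
  by (rule measurable_PiM_single') auto

lemma hits_sets[measurable]:
  assumes [measurable]: "C \<in> sets borel"
  shows "hits C \<in> sets M"
  unfolding hits_def by measurable

lemma hits_mono: "C \<subseteq> D \<Longrightarrow> hits C \<subseteq> hits D"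
  unfolding hits_def by auto

lemma mem_hits_iff: "\<omega> \<in> space M \<Longrightarrow> \<omega> \<in> hits C \<longleftrightarrow> points \<omega> \<inter> C \<noteq> {}"
  unfolding hits_def points_def by auto

lemma points_subset: "\<omega> \<in> space M \<Longrightarrow> points \<omega> \<subseteq> {0<..<1}"
  using X_in_unit_interval unfolding points_def by auto

lemma npoints_eq_top_iff: "npoints B \<omega> = \<top> \<longleftrightarrow> infinite (B \<inter> points \<omega>)"
  unfolding npoints_def by (auto simp: emeasure_count_space_infinite emeasure_count_space_finite)

lemma npoints_finite: "finite (B \<inter> points \<omega>) \<Longrightarrow> npoints B \<omega> = of_nat (card (B \<inter> points \<omega>))"
  unfolding npoints_def by (simp add: emeasure_count_space_finite)

(* Both sides are 0 when the set is infinite. *)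
lemma enn2real_npoints: "enn2real (npoints B \<omega>) = real (card (B \<inter> points \<omega>))"
  by (cases "finite (B \<inter> points \<omega>)") (simp_all add: npoints_finite npoints_eq_top_iff[THEN iffD2])

lemma dyadic_index_image_points:
  assumes "\<omega> \<in> space M"
  shows "dyadic_index k ` (B \<inter> points \<omega>) = {j \<in> {..<2^k}. \<omega> \<in> hits (B \<inter> dyadic_cell k j)}"
proof -
  have "x \<in> dyadic_cell k j \<longleftrightarrow> dyadic_index k x = j" "dyadic_index k x < 2^k" if "x \<in> points \<omega>" for x j
    using that points_subset[OF assms] mem_dyadic_cell_iff dyadic_index_less by auto
  then show ?thesis
    using assms by (auto simp: mem_hits_iff)
qed

lemma ncells_eq_sum_indicator:
  assumes "\<omega> \<in> space M"
  shows "real (ncells B k \<omega>) = (\<Sum>j<2^k. indicator (hits (B \<inter> dyadic_cell k j)) \<omega>)"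
  unfolding ncells_def dyadic_index_image_points[OF assms]
  by (simp add: indicator_def sum.If_cases Int_def)

lemma ncells_eq_0_iff:
  assumes "\<omega> \<in> space M"
  shows "ncells B k \<omega> = 0 \<longleftrightarrow> \<omega> \<notin> hits B"
proof -
  have "finite (dyadic_index k ` (B \<inter> points \<omega>))"
    unfolding dyadic_index_image_points[OF assms] by simp
  then show ?thesis
    using assms by (auto simp: ncells_def mem_hits_iff)
qed

lemma measurable_ncells[measurable]:
  assumes [measurable]: "B \<in> sets borel"
  shows "ncells B k \<in> measurable M (count_space UNIV)"
proof -
  have "(\<lambda>\<omega>. \<Sum>j<2^k. indicator (hits (B \<inter> dyadic_cell k j)) \<omega> :: real) \<in> borel_measurable M"
    by measurable
  then have "(\<lambda>\<omega>. nat \<lfloor>\<Sum>j<2^k. indicator (hits (B \<inter> dyadic_cell k j)) \<omega> :: real\<rfloor>) \<in> measurable M (count_space UNIV)"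
    by measurable
  then show ?thesis
    by (rule measurable_cong[THEN iffD1, rotated]) (simp flip: ncells_eq_sum_indicator)
qed

lemma ncells_le_npoints: "of_nat (ncells B k \<omega>) \<le> npoints B \<omega>"
proof (cases "finite (B \<inter> points \<omega>)")
  case True
  then show ?thesis
    unfolding ncells_def npoints_finite[OF True] by (simp add: card_image_le)
qed (simp add: npoints_eq_top_iff[THEN iffD2])

lemma eventually_ncells_eq_card:
  assumes "\<omega> \<in> space M" "finite (B \<inter> points \<omega>)"
  shows "eventually (\<lambda>k. ncells B k \<omega> = card (B \<inter> points \<omega>)) sequentially"
proof -
  have "B \<inter> points \<omega> \<subseteq> {0..}"
    using points_subset[OF assms(1)] by auto
  from eventually_inj_on_dyadic_index[OF assms(2) this] show ?thesis
    by (rule eventually_mono) (simp add: ncells_def card_image)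
qed

lemma eventually_ncells_ge:
  assumes "\<omega> \<in> space M" "infinite (B \<inter> points \<omega>)"
  shows "eventually (\<lambda>k. m \<le> ncells B k \<omega>) sequentially"
proof -
  obtain F where F: "F \<subseteq> B \<inter> points \<omega>" "finite F" "card F = m"
    using infinite_arbitrarily_large[OF assms(2)] by blast
  have "F \<subseteq> {0..}"
    using F(1) points_subset[OF assms(1)] by auto
  from eventually_inj_on_dyadic_index[OF F(2) this] show ?thesis
  proof eventually_elim
    case (elim k)
    have "finite (dyadic_index k ` (B \<inter> points \<omega>))"
      unfolding dyadic_index_image_points[OF assms(1)] by simp
    then have "card (dyadic_index k ` F) \<le> ncells B k \<omega>"
      unfolding ncells_def using F(1) by (intro card_mono) auto
    then show ?case
      using elim F by (simp add: card_image)
  qed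
qed

lemma npoints_eq_liminf_ncells:
  assumes "\<omega> \<in> space M"
  shows "npoints B \<omega> = liminf (\<lambda>k. of_nat (ncells B k \<omega>))"
proof (cases "finite (B \<inter> points \<omega>)")
  case True
  have "((\<lambda>k. of_nat (ncells B k \<omega>) :: ennreal) \<longlongrightarrow> of_nat (card (B \<inter> points \<omega>))) sequentially"
    using eventually_ncells_eq_card[OF assms True]
    by (rule tendsto_eventually[OF eventually_mono]) simp
  then show ?thesis
    using True by (simp add: npoints_finite lim_imp_Liminf)
next
  case False
  have "of_nat m \<le> liminf (\<lambda>k. of_nat (ncells B k \<omega>) :: ennreal)" for m
    using eventually_ncells_ge[OF assms False, of m]
    by (intro Liminf_bounded) (auto elim: eventually_mono)
  then have "liminf (\<lambda>k. of_nat (ncells B k \<omega>) :: ennreal) = \<top>"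
    by (rule ennreal_eq_top_if_of_nat_le)
  then show ?thesis
    using False npoints_eq_top_iff by simp
qed

lemma measurable_npoints[measurable]:
  assumes [measurable]: "B \<in> sets borel"
  shows "npoints B \<in> borel_measurable M"
proof -
  have "(\<lambda>\<omega>. liminf (\<lambda>k. of_nat (ncells B k \<omega>) :: ennreal)) \<in> borel_measurable M"
    by measurable
  then show ?thesis
    by (rule measurable_cong[THEN iffD1, rotated]) (simp add: npoints_eq_liminf_ncells)
qed

lemma measurable_card_points[measurable]:
  assumes [measurable]: "B \<in> sets borel"
  shows "(\<lambda>\<omega>. card (B \<inter> points \<omega>)) \<in> measurable M (count_space UNIV)"
proof -
  have "(\<lambda>\<omega>. nat \<lfloor>enn2real (npoints B \<omega>)\<rfloor>) \<in> measurable M (count_space UNIV)"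
    by measurable
  then show ?thesis
    by (simp add: enn2real_npoints)
qed

lemma nn_integral_ncells:
  assumes [measurable]: "B \<in> sets borel"
  shows "(\<integral>\<^sup>+\<omega>. of_nat (ncells B k \<omega>) \<partial>M) = ennreal (\<Sum>j<2^k. cell_prob B k j)"
proof -
  have "(\<integral>\<^sup>+\<omega>. of_nat (ncells B k \<omega>) \<partial>M) =
        (\<integral>\<^sup>+\<omega>. (\<Sum>j<2^k. ennreal (indicator (hits (B \<inter> dyadic_cell k j)) \<omega>)) \<partial>M)"
    by (intro nn_integral_cong)
       (simp add: ennreal_of_nat_eq_real_of_nat ncells_eq_sum_indicator flip: sum_ennreal)
  also have "\<dots> = (\<Sum>j<2^k. ennreal (cell_prob B k j))"
    by (subst nn_integral_sum) (auto simp: cell_prob_def emeasure_eq_measure ennreal_indicator)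
  also have "\<dots> = ennreal (\<Sum>j<2^k. cell_prob B k j)"
    by (simp add: sum_ennreal cell_prob_def)
  finally show ?thesis .
qed

lemma scaled_cell_prob_le:
  assumes "0 \<le> t" "t \<le> 1"
  shows "t * cell_prob B k j \<le> cell_prob B k j"
  using assms by (intro mult_left_le_one_le) (auto simp: cell_prob_def)

lemma sets_intensity[simp]: "sets intensity = sets borel"
  unfolding intensity_def
  using sigma_algebra.sigma_sets_eq[OF sigma_algebra_borel_UNIV] by (simp add: sets_measure_of_conv)

lemma emeasure_intensity:
  assumes "B \<in> sets borel"
  shows "emeasure intensity B = (\<integral>\<^sup>+\<omega>. npoints B \<omega> \<partial>M)"
  unfolding intensity_def
proof (rule emeasure_measure_of_sigma[OF sigma_algebra_borel_UNIV _ _ assms])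
  show "positive (sets borel) (\<lambda>B. \<integral>\<^sup>+\<omega>. npoints B \<omega> \<partial>M)"
    by (simp add: positive_def npoints_def)
  show "countably_additive (sets borel) (\<lambda>B. \<integral>\<^sup>+\<omega>. npoints B \<omega> \<partial>M)"
  proof (rule countably_additiveI)
    fix A :: "nat \<Rightarrow> real set"
    assume A: "range A \<subseteq> sets borel" "disjoint_family A"
    then have [measurable]: "A i \<in> sets borel" for i
      by auto
    have "(\<Sum>i. npoints (A i) \<omega>) = npoints (\<Union>i. A i) \<omega>" for \<omega>
    proof -
      have "disjoint_family (\<lambda>i. A i \<inter> points \<omega>)"
        using A(2) by (auto simp: disjoint_family_on_def)
      moreover have "(\<Union>i. A i \<inter> points \<omega>) = (\<Union>i. A i) \<inter> points \<omega>"
        by blast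
      ultimately show ?thesis
        unfolding npoints_def by (simp add: suminf_emeasure)
    qed
    moreover have "(\<Sum>i. \<integral>\<^sup>+\<omega>. npoints (A i) \<omega> \<partial>M) = \<integral>\<^sup>+\<omega>. (\<Sum>i. npoints (A i) \<omega>) \<partial>M"
      by (rule nn_integral_suminf[symmetric]) measurable
    ultimately show "(\<Sum>i. \<integral>\<^sup>+\<omega>. npoints (A i) \<omega> \<partial>M) = \<integral>\<^sup>+\<omega>. npoints (\<Union>i. A i) \<omega> \<partial>M"
      by simp
  qed
qed

lemma AE_infinite_if_AE_npoints_ge:
  assumes "\<And>m. AE \<omega> in M. of_nat m \<le> npoints B \<omega>"
  shows "AE \<omega> in M. infinite (B \<inter> points \<omega>)"
proof -
  have "AE \<omega> in M. \<forall>m. of_nat m \<le> npoints B \<omega>"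
    using assms by (simp add: AE_all_countable)
  then show ?thesis
    by eventually_elim (simp add: ennreal_eq_top_if_of_nat_le flip: npoints_eq_top_iff)
qed

lemma distr_indicator_hits_eq:
  assumes "rcs_ident_distr I Q UNIV (seq_law M X)" "countable I"
    and [measurable]: "\<And>i. i \<in> K \<Longrightarrow> C i \<in> sets borel"
  shows "distr M (\<Pi>\<^sub>M i\<in>K. borel) (\<lambda>\<omega>. \<lambda>i\<in>K. indicator (hits (C i)) \<omega> :: real)
    = distr Q (\<Pi>\<^sub>M i\<in>K. borel) (\<lambda>y. \<lambda>i\<in>K. of_bool (y ` I \<inter> C i \<noteq> {}))"
proof -
  define \<Phi> where "\<Phi> T = (\<lambda>i\<in>K. of_bool (T \<inter> C i \<noteq> {}) :: real)" for T
  have \<Phi>_seq: "(\<lambda>x. \<Phi> (range x)) \<in> measurable (seqsp (UNIV :: nat set)) (\<Pi>\<^sub>M i\<in>K. borel)"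
    unfolding \<Phi>_def by (intro measurable_restrict borel_measurable_of_bool_image_meets) auto
  have \<Phi>_Q: "(\<lambda>y. \<Phi> (y ` I)) \<in> measurable (seqsp I) (\<Pi>\<^sub>M i\<in>K. borel)"
    unfolding \<Phi>_def using assms(2) by (intro measurable_restrict borel_measurable_of_bool_image_meets) auto
  have "distr M (\<Pi>\<^sub>M i\<in>K. borel) (\<lambda>\<omega>. \<lambda>i\<in>K. indicator (hits (C i)) \<omega>)
      = distr (seq_law M X) (\<Pi>\<^sub>M i\<in>K. borel) (\<lambda>x. \<Phi> (range x))"
    unfolding seq_law_def using \<Phi>_seq
    by (subst distr_distr) (auto intro!: distr_cong restrict_ext simp: \<Phi>_def indicator_def mem_hits_iff points_def)
  also have "\<dots> = distr Q (\<Pi>\<^sub>M i\<in>K. borel) (\<lambda>y. \<Phi> (y ` I))"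
    by (rule rcs_ident_distr_distr_eq[OF assms(1) \<Phi>_Q \<Phi>_seq, symmetric])
  finally show ?thesis
    by (simp add: \<Phi>_def)
qed

end

section \<open>Independence and the void probability\<close>

locale independent_rcs = random_countable_set +
  assumes independence: "independence_condition M X"
begin

lemma indep_vars_indicator_hits:
  assumes part: "2 \<le> n" "a 0 = 0" "a n = 1" "\<forall>i<n. a i < a (Suc i)"
    and C[measurable]: "\<And>i. C i \<in> sets borel"
    and C_sub: "\<And>i. i < n \<Longrightarrow> C i \<subseteq> {a i..<a (Suc i)}"
  shows "indep_vars (\<lambda>_. borel) (\<lambda>i. indicator (hits (C i)) :: 'a \<Rightarrow> real) {..<n}"
proof -
  define I where "I = {..<n} \<times> (UNIV :: nat set)"
  obtain Q where Q: "prob_space Q" "sets Q = sets (seqsp I)"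
      "rcs_ident_distr I Q UNIV (seq_law M X)"
      "AE y in Q. \<forall>i<n. \<forall>j. y (i, j) \<in> {a i..<a (Suc i)}"
      "prob_space.indep_vars Q (\<lambda>_. seqsp UNIV) (\<lambda>i y. \<lambda>j. y (i, j)) {..<n}"
    using independence part unfolding independence_condition_def I_def by blast
  note sets_Q = measurable_cong_sets[OF Q(2) refl]
  have meets_Q: "(\<lambda>y. of_bool (y ` I \<inter> C i \<noteq> {}) :: real) \<in> borel_measurable Q" for i
    unfolding sets_Q by (rule borel_measurable_of_bool_image_meets) (simp_all add: I_def)
  have block: "(\<lambda>y. \<lambda>j. y (i, j)) \<in> measurable (seqsp I) (seqsp UNIV)" if "i < n" for i
    by (rule measurable_PiM_single') (use that in \<open>auto simp: I_def\<close>)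
  have block_meets: "(\<lambda>y. of_bool (range (\<lambda>j. y (i, j)) \<inter> C i \<noteq> {}) :: real) \<in> borel_measurable Q"
    if "i < n" for i
    using measurable_compose[OF block[OF that] borel_measurable_of_bool_image_meets[of UNIV "C i"]]
    by (simp add: sets_Q)
  have "distr M (\<Pi>\<^sub>M i\<in>{..<n}. borel) (\<lambda>\<omega>. \<lambda>i\<in>{..<n}. indicator (hits (C i)) \<omega> :: real)
      = distr Q (\<Pi>\<^sub>M i\<in>{..<n}. borel) (\<lambda>y. \<lambda>i\<in>{..<n}. of_bool (y ` I \<inter> C i \<noteq> {}))"
    by (rule distr_indicator_hits_eq[OF Q(3)]) (auto simp: I_def)
  also have "\<dots> = distr Q (\<Pi>\<^sub>M i\<in>{..<n}. borel) (\<lambda>y. \<lambda>i\<in>{..<n}. of_bool (range (\<lambda>j. y (i, j)) \<inter> C i \<noteq> {}))"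
  proof (rule distr_cong_AE)
    show "AE y in Q. (\<lambda>i\<in>{..<n}. of_bool (y ` I \<inter> C i \<noteq> {}) :: real)
        = (\<lambda>i\<in>{..<n}. of_bool (range (\<lambda>j. y (i, j)) \<inter> C i \<noteq> {}))"
      using Q(4) by eventually_elim
        (intro restrict_ext, simp add: I_def image_blocks_Int_nonempty_iff[OF part(4) _ _ C_sub])
  qed (use meets_Q block_meets in \<open>auto intro!: measurable_restrict\<close>)
  finally have joint: "distr M (\<Pi>\<^sub>M i\<in>{..<n}. borel) (\<lambda>\<omega>. \<lambda>i\<in>{..<n}. indicator (hits (C i)) \<omega> :: real)
      = distr Q (\<Pi>\<^sub>M i\<in>{..<n}. borel) (\<lambda>y. \<lambda>i\<in>{..<n}. of_bool (range (\<lambda>j. y (i, j)) \<inter> C i \<noteq> {}))" .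
  show ?thesis
  proof (rule indep_vars_if_distr_eq[OF prob_space_axioms Q(1) _ _ _ joint])
    show "prob_space.indep_vars Q (\<lambda>_. borel) (\<lambda>i y. of_bool (range (\<lambda>j. y (i, j)) \<inter> C i \<noteq> {}) :: real) {..<n}"
      using borel_measurable_of_bool_image_meets[of "UNIV :: nat set"]
      by (intro prob_space.indep_vars_compose2[OF Q(1,5)]) auto
  qed (use part(1) block_meets in \<open>auto simp: lessThan_empty_iff\<close>)
qed

lemma indep_vars_indicator_hits_dyadic_cells:
  assumes "1 \<le> k" and [measurable]: "B \<in> sets borel"
  shows "indep_vars (\<lambda>_. borel) (\<lambda>j. indicator (hits (B \<inter> dyadic_cell k j)) :: 'a \<Rightarrow> real) {..<2^k}"
proof (rule indep_vars_indicator_hits)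
  show "2 \<le> (2::nat) ^ k"
    using power_increasing[OF assms(1), of "2::nat"] by simp
  show "B \<inter> dyadic_cell k j \<subseteq> {real j / 2 ^ k..<real (Suc j) / 2 ^ k}" for j
    unfolding dyadic_cell_def by (auto simp: add.commute)
qed (auto simp: divide_strict_right_mono)

lemma integral_power_ncells:
  assumes "1 \<le> k" and [measurable]: "B \<in> sets borel"
  shows "(\<integral>\<omega>. s ^ ncells B k \<omega> \<partial>M) = (\<Prod>j<2^k. 1 - (1 - s) * cell_prob B k j)"
proof -
  define Y where "Y j \<omega> = 1 - (1 - s) * indicator (hits (B \<inter> dyadic_cell k j)) \<omega>" for j \<omega>
  have indep: "indep_vars (\<lambda>_. borel) Y {..<2^k}"
    unfolding Y_def
    by (rule indep_vars_compose2[OF indep_vars_indicator_hits_dyadic_cells[OF assms]]) simp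
  have integrable: "integrable M (indicator (hits (B \<inter> dyadic_cell k j)) :: 'a \<Rightarrow> real)" for j
    by (rule integrable_real_indicator) (auto simp: less_top[symmetric])
  have "integrable M (\<lambda>_. 1 :: real)"
    by simp
  then have integrable_Y: "integrable M (Y j)" for j
    unfolding Y_def using integrable by (intro Bochner_Integration.integrable_diff integrable_mult_right)
  have "s ^ ncells B k \<omega> = (\<Prod>j<2^k. Y j \<omega>)" if "\<omega> \<in> space M" for \<omega>
  proof -
    have "(\<Prod>j<2^k. Y j \<omega>) = (\<Prod>j<2^k. if \<omega> \<in> hits (B \<inter> dyadic_cell k j) then s else 1)"
      by (intro prod.cong) (auto simp: Y_def indicator_def)
    also have "\<dots> = s ^ card {j \<in> {..<2^k}. \<omega> \<in> hits (B \<inter> dyadic_cell k j)}"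
      by (simp add: prod.If_cases Int_def)
    finally show ?thesis
      by (simp add: ncells_def dyadic_index_image_points[OF that])
  qed
  then have "(\<integral>\<omega>. s ^ ncells B k \<omega> \<partial>M) = (\<integral>\<omega>. (\<Prod>j<2^k. Y j \<omega>) \<partial>M)"
    by (rule Bochner_Integration.integral_cong[OF refl])
  also have "\<dots> = (\<Prod>j<2^k. \<integral>\<omega>. Y j \<omega> \<partial>M)"
    using integrable_Y by (intro indep_vars_lebesgue_integral[OF _ indep]) auto
  also have "\<dots> = (\<Prod>j<2^k. 1 - (1 - s) * cell_prob B k j)"
    using integrable by (intro prod.cong refl) (simp add: Y_def cell_prob_def prob_space)
  finally show ?thesis .
qed

lemma void_prob_eq_prod:
  assumes "1 \<le> k" and [measurable]: "B \<in> sets borel"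
  shows "void_prob B = (\<Prod>j<2^k. 1 - cell_prob B k j)"
proof -
  have "0 ^ ncells B k \<omega> = (indicator (space M - hits B) \<omega> :: real)" if "\<omega> \<in> space M" for \<omega>
    using ncells_eq_0_iff[OF that, of B k] that by (cases "ncells B k \<omega>") (auto simp: indicator_def)
  then have "(\<integral>\<omega>. (0::real) ^ ncells B k \<omega> \<partial>M) = (\<integral>\<omega>. indicator (space M - hits B) \<omega> \<partial>M)"
    by (intro Bochner_Integration.integral_cong) auto
  then show ?thesis
    using integral_power_ncells[OF assms, of 0] by (simp add: void_prob_def)
qed

lemma sum_cell_prob_le:
  assumes "1 \<le> k" and [measurable]: "B \<in> sets borel" and "0 < void_prob B"
  shows "(\<Sum>j<2^k. cell_prob B k j) \<le> - ln (void_prob B)"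
proof -
  have "void_prob B \<le> (\<Prod>j<2^k. exp (- cell_prob B k j))"
    unfolding void_prob_eq_prod[OF assms(1,2)]
    by (intro prod_mono) (auto simp: exp_minus_ge cell_prob_def)
  also have "\<dots> = exp (- (\<Sum>j<2^k. cell_prob B k j))"
    by (simp add: exp_sum flip: sum_negf)
  finally have "ln (void_prob B) \<le> ln (exp (- (\<Sum>j<2^k. cell_prob B k j)))"
    using assms(3) by (subst ln_le_cancel_iff) auto
  then show ?thesis
    by simp
qed

lemma nn_integral_npoints_le:
  assumes [measurable]: "B \<in> sets borel" and "0 < void_prob B"
  shows "(\<integral>\<^sup>+\<omega>. npoints B \<omega> \<partial>M) \<le> ennreal (- ln (void_prob B))"
proof -
  have "(\<integral>\<^sup>+\<omega>. npoints B \<omega> \<partial>M) = (\<integral>\<^sup>+\<omega>. liminf (\<lambda>k. of_nat (ncells B k \<omega>)) \<partial>M)"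
    by (intro nn_integral_cong) (simp add: npoints_eq_liminf_ncells)
  also have "\<dots> \<le> liminf (\<lambda>k. \<integral>\<^sup>+\<omega>. of_nat (ncells B k \<omega>) \<partial>M)"
    by (rule nn_integral_liminf) simp
  also have "\<dots> = liminf (\<lambda>k. ennreal (\<Sum>j<2^k. cell_prob B k j))"
    by (simp add: nn_integral_ncells)
  also have "\<dots> \<le> ennreal (- ln (void_prob B))"
  proof (rule Liminf_le)
    show "eventually (\<lambda>k. ennreal (\<Sum>j<2^k. cell_prob B k j) \<le> ennreal (- ln (void_prob B))) sequentially"
      using eventually_ge_at_top[of 1]
      by (rule eventually_mono) (intro ennreal_leI sum_cell_prob_le assms)
  qed simp
  finally show ?thesis .
qed

lemma AE_finite_if_void_prob_pos:
  assumes [measurable]: "B \<in> sets borel" and "0 < void_prob B"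
  shows "AE \<omega> in M. finite (B \<inter> points \<omega>)"
proof -
  have "(\<integral>\<^sup>+\<omega>. npoints B \<omega> \<partial>M) \<noteq> \<infinity>"
    using nn_integral_npoints_le[OF assms] by (auto simp: top_unique)
  then have "AE \<omega> in M. npoints B \<omega> \<noteq> \<infinity>"
    by (intro nn_integral_PInf_AE) simp
  then show ?thesis
    by (simp add: npoints_eq_top_iff)
qed

lemma cell_prob_less_1:
  assumes "1 \<le> k" "B \<in> sets borel" "0 < void_prob B" "j < 2^k"
  shows "cell_prob B k j < 1"
proof -
  have "(\<Prod>j<2^k. 1 - cell_prob B k j) \<noteq> 0"
    using assms(3) void_prob_eq_prod[OF assms(1,2)] by linarith
  then have "1 - cell_prob B k j \<noteq> 0"
    using assms(4) by (metis finite_lessThan lessThan_iff prod_zero_iff)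
  moreover have "cell_prob B k j \<le> 1"
    by (simp add: cell_prob_def)
  ultimately show ?thesis
    by simp
qed

end

section \<open>Random sets avoiding Lebesgue null sets\<close>

locale diffuse_rcs = random_countable_set +
  assumes null_sets_avoided: "\<And>B. B \<in> sets borel \<Longrightarrow> B \<subseteq> {0<..<1} \<Longrightarrow> emeasure lborel B = 0 \<Longrightarrow>
      AE \<omega> in M. B \<inter> range (\<lambda>k. X k \<omega>) = {}"
begin

lemma AE_points_disjoint_null_set:
  assumes "N \<in> null_sets lborel"
  shows "AE \<omega> in M. N \<inter> points \<omega> = {}"
proof -
  have "{0<..<1} \<inter> N \<in> null_sets lborel"
    using assms by (auto intro: null_set_Int1 null_set_Int2)
  then have "{0<..<1} \<inter> N \<in> sets borel" "emeasure lborel ({0<..<1} \<inter> N) = 0"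
    by auto
  then have "AE \<omega> in M. {0<..<1} \<inter> N \<inter> points \<omega> = {}"
    using null_sets_avoided[of "{0<..<1} \<inter> N"] by (simp add: points_def)
  then show ?thesis
    using AE_space by eventually_elim (use points_subset in blast)
qed

lemma prob_hits_Int_ball_tendsto_0:
  assumes [measurable]: "B \<in> sets borel" and finite: "AE \<omega> in M. finite (B \<inter> points \<omega>)"
  shows "(\<lambda>n. prob (hits (B \<inter> ball x (1 / Suc n)))) \<longlonglongrightarrow> 0"
proof -
  define A where "A n = hits (B \<inter> ball x (1 / Suc n))" for n
  have A_sets: "range A \<subseteq> sets M"
    unfolding A_def by auto
  have "decseq A"
    unfolding A_def by (intro decseq_SucI hits_mono Int_mono subset_ball) (auto simp: frac_le)
  have "{x} \<in> null_sets lborel"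
    by (rule countable_imp_null_set_lborel) simp
  \<comment> \<open>In \<open>\<Inter>n. A n\<close>, either \<open>x\<close> is a point or points of \<open>B\<close> accumulate at \<open>x\<close>: both are null events.\<close>
  have "AE \<omega> in M. \<omega> \<notin> (\<Inter>n. A n)"
    using finite AE_points_disjoint_null_set[OF \<open>{x} \<in> null_sets lborel\<close>]
  proof eventually_elim
    case (elim \<omega>)
    obtain d where d: "0 < d" "\<forall>y \<in> B \<inter> points \<omega>. y \<noteq> x \<longrightarrow> d \<le> dist x y"
      using finite_set_avoid[OF elim(1)] by blast
    obtain n :: nat where n: "1 / Suc n < d"
      using d(1) nat_approx_posE by metis
    have "\<omega> \<notin> A n"
    proof
      assume "\<omega> \<in> A n"
      then obtain k where "X k \<omega> \<in> B \<inter> ball x (1 / Suc n)"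
        by (auto simp: A_def hits_def)
      then have y: "X k \<omega> \<in> B \<inter> points \<omega>" "dist x (X k \<omega>) < 1 / Suc n"
        by (auto simp: points_def)
      moreover have "X k \<omega> \<noteq> x"
        using y(1) elim(2) by auto
      ultimately show False
        using d n by fastforce
    qed
    then show ?case
      by blast
  qed
  then have "prob (\<Inter>n. A n) = 0"
    using A_sets by (subst prob_eq_0) auto
  then show ?thesis
    using finite_Lim_measure_decseq[OF A_sets \<open>decseq A\<close>] by (simp add: A_def)
qed

lemma eventually_cell_prob_le:
  assumes [measurable]: "B \<in> sets borel" and "AE \<omega> in M. finite (B \<inter> points \<omega>)"
    and "0 < e"
  shows "eventually (\<lambda>k. \<forall>j<2^k. cell_prob B k j \<le> e) sequentially"
proof -
  have "\<exists>\<delta>>0. prob (hits (B \<inter> ball x \<delta>)) < e" for x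
  proof -
    have "eventually (\<lambda>n. prob (hits (B \<inter> ball x (1 / Suc n))) < e) sequentially"
      using prob_hits_Int_ball_tendsto_0[OF assms(1,2)] \<open>0 < e\<close> by (rule order_tendstoD)
    then obtain n where "prob (hits (B \<inter> ball x (1 / Suc n))) < e"
      by (auto simp: eventually_sequentially)
    then show ?thesis
      by (intro exI[of _ "1 / Suc n"]) auto
  qed
  then obtain \<delta> where \<delta>: "\<And>x. 0 < \<delta> x" "\<And>x. prob (hits (B \<inter> ball x (\<delta> x))) < e"
    by metis
  \<comment> \<open>Every cell smaller than a Lebesgue number of this cover of \<open>[0,1]\<close> lies in one of its balls.\<close>
  obtain e0 where e0: "0 < e0" "\<And>y. y \<in> {0..1} \<Longrightarrow> \<exists>x \<in> {0..1}. ball y e0 \<subseteq> ball x (\<delta> x)"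
  proof (rule Heine_Borel_lemma[of "{0..1::real}" "(\<lambda>x. ball x (\<delta> x)) ` {0..1}"])
    show "{0..1::real} \<subseteq> \<Union> ((\<lambda>x. ball x (\<delta> x)) ` {0..1})"
      using \<delta>(1) by force
  qed auto
  obtain K where K: "1 / e0 < 2^K"
    using real_arch_pow[of 2 "1 / e0"] by auto
  show ?thesis
  proof (rule eventually_sequentiallyI[of K], intro allI impI)
    fix k j assume "K \<le> k" and j: "j < (2::nat)^k"
    then have "1 / e0 < 2^k"
      using K power_increasing[of K k "2::real"] by linarith
    then have "1 / 2^k < e0"
      using e0(1) by (simp add: field_simps)
    moreover have "real j / 2^k \<in> {0..1}"
      using j by (simp add: field_simps)
    ultimately obtain x where "dyadic_cell k j \<subseteq> ball x (\<delta> x)"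
      using e0(2) dyadic_cell_subset_ball by blast
    then have "cell_prob B k j \<le> prob (hits (B \<inter> ball x (\<delta> x)))"
      unfolding cell_prob_def by (intro finite_measure_mono hits_mono) auto
    then show "cell_prob B k j \<le> e"
      using \<delta>(2)[of x] by simp
  qed
qed

lemma absolutely_continuous_intensity: "absolutely_continuous lborel intensity"
  unfolding absolutely_continuous_def
proof
  fix N :: "real set" assume N: "N \<in> null_sets lborel"
  then have "emeasure intensity N = (\<integral>\<^sup>+\<omega>. npoints N \<omega> \<partial>M)"
    by (intro emeasure_intensity) auto
  also have "\<dots> = (\<integral>\<^sup>+\<omega>. 0 \<partial>M)"
    using AE_points_disjoint_null_set[OF N] by (intro nn_integral_cong_AE) (auto simp: npoints_def)
  finally have "emeasure intensity N = 0"
    by simp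
  then show "N \<in> null_sets intensity"
    using N by (auto simp: null_sets_def)
qed

lemma SUP_intensity_Int_le_eq:
  fixes r :: "real \<Rightarrow> ennreal"
  assumes [measurable]: "r \<in> borel_measurable borel" "B \<in> sets borel"
    and "emeasure lborel (B \<inter> {x. r x = \<infinity>}) = 0"
  shows "(SUP n. emeasure intensity (B \<inter> {x. r x \<le> of_nat n})) = emeasure intensity B"
proof -
  have "incseq (\<lambda>n. B \<inter> {x. r x \<le> of_nat n})"
  proof (rule incseq_SucI)
    fix n
    have "(of_nat n :: ennreal) \<le> of_nat (Suc n)"
      by (rule of_nat_mono) simp
    then show "B \<inter> {x. r x \<le> of_nat n} \<subseteq> B \<inter> {x. r x \<le> of_nat (Suc n)}"
      using order_trans by blast
  qed
  then have "(SUP n. emeasure intensity (B \<inter> {x. r x \<le> of_nat n}))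
      = emeasure intensity (\<Union>n. B \<inter> {x. r x \<le> of_nat n})"
    by (intro SUP_emeasure_incseq) auto
  also have "(\<Union>n. B \<inter> {x. r x \<le> of_nat n}) = B - B \<inter> {x. r x = \<infinity>}"
  proof (intro equalityI subsetI)
    fix x assume "x \<in> B - B \<inter> {x. r x = \<infinity>}"
    moreover obtain n where "r x < of_nat n"
      using calculation ennreal_Ex_less_of_nat[of "r x"] by (auto simp: less_top)
    ultimately show "x \<in> (\<Union>n. B \<inter> {x. r x \<le> of_nat n})"
      by (auto intro!: less_imp_le)
  qed (auto simp: top_unique)
  also have "emeasure intensity \<dots> = emeasure intensity B"
  proof (rule emeasure_Diff_null_set)
    have "B \<inter> {x. r x = \<infinity>} \<in> null_sets lborel"
      using assms(3) by (intro null_setsI) auto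
    then show "B \<inter> {x. r x = \<infinity>} \<in> null_sets intensity"
      using absolutely_continuous_intensity unfolding absolutely_continuous_def by blast
  qed simp
  finally show ?thesis .
qed

lemma intensity_density:
  obtains r :: "real \<Rightarrow> ennreal" where "r \<in> borel_measurable borel"
    "\<And>A. A \<in> sets borel \<Longrightarrow> set_nn_integral lborel A r = emeasure intensity A"
proof -
  obtain r where r: "r \<in> borel_measurable lborel" "density lborel r = intensity"
    using sigma_finite_measure.Radon_Nikodym[OF lborel.sigma_finite_measure_axioms absolutely_continuous_intensity] by auto
  show ?thesis
  proof (rule that)
    show "r \<in> borel_measurable borel"
      using r(1) by simp
    show "set_nn_integral lborel A r = emeasure intensity A" if "A \<in> sets borel" for A
      using that r by (auto simp flip: r(2) intro!: emeasure_density[symmetric])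
  qed
qed

end

section \<open>The Poisson law\<close>

locale poisson_rcs = independent_rcs + diffuse_rcs
begin

lemma void_prob_pos_iff_AE_finite:
  assumes [measurable]: "B \<in> sets borel"
  shows "0 < void_prob B \<longleftrightarrow> (AE \<omega> in M. finite (B \<inter> points \<omega>))"
proof
  assume "AE \<omega> in M. finite (B \<inter> points \<omega>)"
  then obtain K where K: "\<And>k. K \<le> k \<Longrightarrow> \<forall>j<2^k. cell_prob B k j \<le> 1/2"
    using eventually_cell_prob_le[OF assms, of "1/2"] by (auto simp: eventually_sequentially)
  define k where "k = max K 1"
  have "0 < (\<Prod>j<2^k. 1 - cell_prob B k j)"
    using K[of k] by (intro prod_pos) (auto simp: k_def)
  then show "0 < void_prob B"
    by (simp add: void_prob_eq_prod[of k] k_def)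
qed (rule AE_finite_if_void_prob_pos[OF assms])

lemma tendsto_sum_ln_one_minus_cell_prob:
  assumes [measurable]: "B \<in> sets borel" and p: "0 < void_prob B" and t: "0 \<le> t" "t \<le> 1"
  shows "(\<lambda>k. (\<Sum>j<2^k. ln (1 - t * cell_prob B k j)) + t * (\<Sum>j<2^k. cell_prob B k j)) \<longlonglongrightarrow> 0"
proof -
  have finite: "AE \<omega> in M. finite (B \<inter> points \<omega>)"
    using void_prob_pos_iff_AE_finite[OF assms(1)] p by simp
  note t_le = scaled_cell_prob_le[OF t]
  have "(\<lambda>k. (\<Sum>j<2^k. ln (1 - t * cell_prob B k j)) + (\<Sum>j<2^k. t * cell_prob B k j)) \<longlonglongrightarrow> 0"
  proof (rule tendsto_sum_ln_one_minus_plus_sum)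
    show "0 \<le> t * cell_prob B k j" for k j
      using t by (simp add: cell_prob_def)
    show "eventually (\<lambda>k. (\<Sum>j<2^k. t * cell_prob B k j) \<le> - ln (void_prob B)) sequentially"
      using eventually_ge_at_top[of 1]
    proof eventually_elim
      case (elim k)
      have "(\<Sum>j<2^k. t * cell_prob B k j) \<le> (\<Sum>j<2^k. cell_prob B k j)"
        using t_le by (rule sum_mono)
      also have "\<dots> \<le> - ln (void_prob B)"
        by (rule sum_cell_prob_le[OF elim assms(1) p])
      finally show ?case .
    qed
    show "eventually (\<lambda>k. \<forall>j<2^k. t * cell_prob B k j \<le> e) sequentially" if "0 < e" for e
      using eventually_cell_prob_le[OF assms(1) finite that]
      by (rule eventually_mono) (use t_le order_trans in blast)
  qed
  then show ?thesis
    by (simp add: sum_distrib_left)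
qed

lemma sum_cell_prob_tendsto:
  assumes [measurable]: "B \<in> sets borel" and "0 < void_prob B"
  shows "(\<lambda>k. \<Sum>j<2^k. cell_prob B k j) \<longlonglongrightarrow> - ln (void_prob B)"
proof -
  have "eventually (\<lambda>k. (\<Sum>j<2^k. ln (1 - cell_prob B k j)) = ln (void_prob B)) sequentially"
    using eventually_ge_at_top[of 1]
  proof eventually_elim
    case (elim k)
    have "1 - cell_prob B k j \<noteq> 0" if "j \<in> {..<2^k}" for j
      using cell_prob_less_1[OF elim assms] that by fastforce
    then show ?case
      unfolding void_prob_eq_prod[OF elim assms(1)] by (intro ln_prod[symmetric]) auto
  qed
  then have "(\<lambda>k. ((\<Sum>j<2^k. ln (1 - 1 * cell_prob B k j)) + 1 * (\<Sum>j<2^k. cell_prob B k j))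
      - (\<Sum>j<2^k. ln (1 - cell_prob B k j))) \<longlonglongrightarrow> 0 - ln (void_prob B)"
    by (intro tendsto_diff tendsto_sum_ln_one_minus_cell_prob[OF assms] tendsto_eventually) auto
  then show ?thesis
    by simp
qed

lemma prod_one_minus_cell_prob_tendsto:
  assumes [measurable]: "B \<in> sets borel" and "0 < void_prob B" and t: "0 \<le> t" "t \<le> 1"
  shows "(\<lambda>k. \<Prod>j<2^k. 1 - t * cell_prob B k j) \<longlonglongrightarrow> exp (t * ln (void_prob B))"
proof -
  have "(\<lambda>k. ((\<Sum>j<2^k. ln (1 - t * cell_prob B k j)) + t * (\<Sum>j<2^k. cell_prob B k j))
      - t * (\<Sum>j<2^k. cell_prob B k j)) \<longlonglongrightarrow> 0 - t * - ln (void_prob B)"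
    by (intro tendsto_diff tendsto_mult tendsto_const
        tendsto_sum_ln_one_minus_cell_prob[OF assms] sum_cell_prob_tendsto[OF assms(1,2)])
  then have "(\<lambda>k. exp (\<Sum>j<2^k. ln (1 - t * cell_prob B k j))) \<longlonglongrightarrow> exp (t * ln (void_prob B))"
    by (intro tendsto_exp) simp
  moreover have "eventually (\<lambda>k. exp (\<Sum>j<2^k. ln (1 - t * cell_prob B k j))
      = (\<Prod>j<2^k. 1 - t * cell_prob B k j)) sequentially"
    using eventually_ge_at_top[of 1]
  proof eventually_elim
    case (elim k)
    have "0 < 1 - t * cell_prob B k j" if "j < 2^k" for j
      using cell_prob_less_1[OF elim assms(1,2) that] scaled_cell_prob_le[OF t, of B k j] by linarith
    then show ?case
      by (simp add: exp_sum)
  qed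
  ultimately show ?thesis
    by (rule Lim_transform_eventually)
qed

lemma emeasure_intensity_eq:
  assumes [measurable]: "B \<in> sets borel" and "0 < void_prob B"
  shows "emeasure intensity B = ennreal (- ln (void_prob B))"
proof (rule antisym)
  show "emeasure intensity B \<le> ennreal (- ln (void_prob B))"
    using nn_integral_npoints_le[OF assms] by (simp add: emeasure_intensity)
  have "ennreal (\<Sum>j<2^k. cell_prob B k j) \<le> emeasure intensity B" for k
    unfolding emeasure_intensity[OF assms(1)] nn_integral_ncells[OF assms(1), symmetric]
    by (intro nn_integral_mono ncells_le_npoints)
  moreover have "(\<lambda>k. ennreal (\<Sum>j<2^k. cell_prob B k j)) \<longlonglongrightarrow> ennreal (- ln (void_prob B))"
    by (intro tendsto_ennrealI sum_cell_prob_tendsto[OF assms])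
  ultimately show "ennreal (- ln (void_prob B)) \<le> emeasure intensity B"
    by (intro LIMSEQ_le_const2) auto
qed

lemma void_prob_pos_iff_intensity_finite:
  assumes [measurable]: "B \<in> sets borel"
  shows "0 < void_prob B \<longleftrightarrow> emeasure intensity B < \<infinity>"
proof
  assume "emeasure intensity B < \<infinity>"
  then have "AE \<omega> in M. npoints B \<omega> \<noteq> \<infinity>"
    by (intro nn_integral_PInf_AE) (auto simp: emeasure_intensity)
  then show "0 < void_prob B"
    by (simp add: void_prob_pos_iff_AE_finite npoints_eq_top_iff)
qed (simp add: emeasure_intensity_eq)

lemma integral_power_card_points:
  assumes [measurable]: "B \<in> sets borel" and "0 < void_prob B" and s: "0 \<le> s" "s \<le> 1"
  shows "(\<integral>\<omega>. s ^ card (B \<inter> points \<omega>) \<partial>M) = exp ((1 - s) * ln (void_prob B))"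
proof -
  have "(\<lambda>k. \<integral>\<omega>. s ^ ncells B k \<omega> \<partial>M) \<longlonglongrightarrow> (\<integral>\<omega>. s ^ card (B \<inter> points \<omega>) \<partial>M)"
  proof (rule integral_dominated_convergence[where w="\<lambda>_. 1"])
    show "AE \<omega> in M. (\<lambda>k. s ^ ncells B k \<omega>) \<longlonglongrightarrow> s ^ card (B \<inter> points \<omega>)"
      using AE_finite_if_void_prob_pos[OF assms(1,2)] AE_space
    proof eventually_elim
      case (elim \<omega>)
      show ?case
        using eventually_ncells_eq_card[OF elim(2,1)]
        by (rule tendsto_eventually[OF eventually_mono]) simp
    qed
    show "AE \<omega> in M. norm (s ^ ncells B k \<omega>) \<le> 1" for k
      using s by (simp add: power_le_one)
  qed (use s in \<open>auto intro: measurable_compose[OF _ measurable_count_space]\<close>)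
  moreover have "(\<lambda>k. \<integral>\<omega>. s ^ ncells B k \<omega> \<partial>M) \<longlonglongrightarrow> exp ((1 - s) * ln (void_prob B))"
  proof (rule Lim_transform_eventually)
    show "(\<lambda>k. \<Prod>j<2^k. 1 - (1 - s) * cell_prob B k j) \<longlonglongrightarrow> exp ((1 - s) * ln (void_prob B))"
      using s by (intro prod_one_minus_cell_prob_tendsto[OF assms(1,2)]) auto
    show "eventually (\<lambda>k. (\<Prod>j<2^k. 1 - (1 - s) * cell_prob B k j) = (\<integral>\<omega>. s ^ ncells B k \<omega> \<partial>M)) sequentially"
      using eventually_ge_at_top[of 1] by (rule eventually_mono) (simp add: integral_power_ncells)
  qed
  ultimately show ?thesis
    by (rule LIMSEQ_unique)
qed

lemma poisson_card_points_if_intensity_finite: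
  assumes [measurable]: "B \<in> sets borel" and finite: "emeasure intensity B < \<infinity>"
  shows "AE \<omega> in M. finite (B \<inter> points \<omega>)"
    and "prob {\<omega> \<in> space M. card (B \<inter> points \<omega>) = m} =
      exp (- enn2real (emeasure intensity B)) * enn2real (emeasure intensity B) ^ m / fact m"
proof -
  have p: "0 < void_prob B"
    using void_prob_pos_iff_intensity_finite[OF assms(1)] finite by simp
  then show "AE \<omega> in M. finite (B \<inter> points \<omega>)"
    by (rule AE_finite_if_void_prob_pos[OF assms(1)])
  have "void_prob B \<le> 1"
    by (simp add: void_prob_def)
  then have \<mu>: "enn2real (emeasure intensity B) = - ln (void_prob B)" "0 \<le> - ln (void_prob B)"
    using p by (simp_all add: emeasure_intensity_eq)
  show "prob {\<omega> \<in> space M. card (B \<inter> points \<omega>) = m} =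
      exp (- enn2real (emeasure intensity B)) * enn2real (emeasure intensity B) ^ m / fact m"
    unfolding \<mu>(1) using \<mu>(2)
    by (intro prob_eq_poisson_if_pgf) (auto simp: integral_power_card_points[OF assms(1) p] algebra_simps)
qed

lemma AE_hits_if_intensity_infinite:
  assumes [measurable]: "B \<in> sets borel" and "emeasure intensity B = \<infinity>"
  shows "AE \<omega> in M. \<omega> \<in> hits B"
proof -
  have "prob (space M - hits B) = 0"
    using void_prob_pos_iff_intensity_finite[OF assms(1)] assms(2) measure_nonneg[of M "space M - hits B"]
    by (simp add: void_prob_def)
  then have "AE \<omega> in M. \<omega> \<notin> space M - hits B"
    by (subst (asm) prob_eq_0) auto
  then show ?thesis
    using AE_space by eventually_elim blast
qed

lemma AE_infinite_if_intensity_infinite_on_positive_subsets: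
  assumes [measurable]: "A \<in> sets borel" and "A \<subseteq> {0..<1}" and "0 < emeasure lborel A"
    and infinite: "\<And>A'. A' \<in> sets borel \<Longrightarrow> A' \<subseteq> A \<Longrightarrow> 0 < emeasure lborel A' \<Longrightarrow> emeasure intensity A' = \<infinity>"
  shows "AE \<omega> in M. infinite (A \<inter> points \<omega>)"
proof (rule AE_infinite_if_AE_npoints_ge)
  fix m
  obtain k where k: "m \<le> card {j \<in> {..<2^k}. 0 < emeasure lborel (A \<inter> dyadic_cell k j)}"
    using ex_many_dyadic_cells_of_positive_measure[OF assms(1-3)] .
  define J where "J = {j \<in> {..<2^k}. 0 < emeasure lborel (A \<inter> dyadic_cell k j)}"
  have "AE \<omega> in M. \<forall>j\<in>J. \<omega> \<in> hits (A \<inter> dyadic_cell k j)"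
    using infinite by (intro AE_finite_allI AE_hits_if_intensity_infinite) (auto simp: J_def)
  then show "AE \<omega> in M. of_nat m \<le> npoints A \<omega>"
    using AE_space
  proof eventually_elim
    case (elim \<omega>)
    have "J \<subseteq> dyadic_index k ` (A \<inter> points \<omega>)"
      using elim by (auto simp: dyadic_index_image_points J_def)
    then have "card J \<le> ncells A k \<omega>"
      unfolding ncells_def by (intro card_mono) (simp_all add: dyadic_index_image_points[OF elim(2)])
    then have "of_nat m \<le> (of_nat (ncells A k \<omega>) :: ennreal)"
      using k by (simp add: J_def)
    also have "\<dots> \<le> npoints A \<omega>"
      by (rule ncells_le_npoints)
    finally show ?case .
  qed
qed

lemma prob_npoints_le_le_poisson_cdf:
  assumes [measurable]: "B \<in> sets borel" "B' \<in> sets borel"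
    and "B' \<subseteq> B" and finite: "emeasure intensity B' < \<infinity>"
  defines "\<mu> \<equiv> enn2real (emeasure intensity B')"
  shows "prob {\<omega> \<in> space M. npoints B \<omega> \<le> of_nat m} \<le> (\<Sum>i\<le>m. exp (- \<mu>) * \<mu> ^ i / fact i)"
proof -
  have "{\<omega> \<in> space M. npoints B \<omega> \<le> of_nat m} \<subseteq> (\<Union>i\<in>{..m}. {\<omega> \<in> space M. card (B' \<inter> points \<omega>) = i})"
  proof safe
    fix \<omega> assume \<omega>: "\<omega> \<in> space M" "npoints B \<omega> \<le> of_nat m"
    then have finite_B: "finite (B \<inter> points \<omega>)"
      using npoints_eq_top_iff[of B \<omega>] by (auto simp: top_unique)
    then have "card (B \<inter> points \<omega>) \<le> m"
      using \<omega>(2) by (simp add: npoints_finite)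
    moreover have "card (B' \<inter> points \<omega>) \<le> card (B \<inter> points \<omega>)"
      using finite_B \<open>B' \<subseteq> B\<close> by (intro card_mono) auto
    ultimately show "\<omega> \<in> (\<Union>i\<in>{..m}. {\<omega> \<in> space M. card (B' \<inter> points \<omega>) = i})"
      using \<omega>(1) by auto
  qed
  then have "prob {\<omega> \<in> space M. npoints B \<omega> \<le> of_nat m}
      \<le> prob (\<Union>i\<in>{..m}. {\<omega> \<in> space M. card (B' \<inter> points \<omega>) = i})"
    by (intro finite_measure_mono) auto
  also have "\<dots> = (\<Sum>i\<le>m. prob {\<omega> \<in> space M. card (B' \<inter> points \<omega>) = i})"
    by (intro finite_measure_finite_Union) (auto simp: disjoint_family_on_def)
  also have "\<dots> = (\<Sum>i\<le>m. exp (- \<mu>) * \<mu> ^ i / fact i)"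
    using poisson_card_points_if_intensity_finite(2)[OF assms(2) finite] by (simp add: \<mu>_def)
  finally show ?thesis .
qed

lemma AE_infinite_if_finite_intensity_subsets_unbounded:
  fixes B' :: "nat \<Rightarrow> real set"
  assumes [measurable]: "B \<in> sets borel" "\<And>n. B' n \<in> sets borel"
    and subset: "\<And>n. B' n \<subseteq> B" and finite: "\<And>n. emeasure intensity (B' n) < \<infinity>"
    and unbounded: "(SUP n. emeasure intensity (B' n)) = \<infinity>"
  shows "AE \<omega> in M. infinite (B \<inter> points \<omega>)"
proof (rule AE_infinite_if_AE_npoints_ge)
  fix m
  have le_e: "prob {\<omega> \<in> space M. npoints B \<omega> \<le> of_nat m} \<le> e" if e: "0 < e" for e
  proof -
    obtain T where T: "\<And>x. T \<le> x \<Longrightarrow> (\<Sum>i\<le>m. exp (- x) * x ^ i / fact i) < e"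
      using order_tendstoD(2)[OF poisson_cdf_tendsto_0 e] by (auto simp: eventually_at_top_linorder)
    obtain n where n: "T \<le> enn2real (emeasure intensity (B' n))"
      using ex_enn2real_ge_if_SUP_eq_infinity[OF unbounded finite] .
    have "prob {\<omega> \<in> space M. npoints B \<omega> \<le> of_nat m}
        \<le> (\<Sum>i\<le>m. exp (- enn2real (emeasure intensity (B' n))) *
              enn2real (emeasure intensity (B' n)) ^ i / fact i)"
      using subset finite by (intro prob_npoints_le_le_poisson_cdf) auto
    also have "\<dots> < e"
      by (rule T[OF n])
    finally show ?thesis
      by simp
  qed
  have "prob {\<omega> \<in> space M. npoints B \<omega> \<le> of_nat m} \<le> 0"
    by (rule field_le_epsilon) (simp add: le_e)
  then have "AE \<omega> in M. \<omega> \<notin> {\<omega> \<in> space M. npoints B \<omega> \<le> of_nat m}"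
    by (subst prob_eq_0[symmetric]) (auto simp: measure_le_0_iff)
  then show "AE \<omega> in M. of_nat m \<le> npoints B \<omega>"
    using AE_space by eventually_elim (auto simp: not_le intro: less_imp_le)
qed

lemma AE_infinite_if_density_integral_infinite:
  assumes [measurable]: "r \<in> borel_measurable borel"
    and density: "\<And>A. A \<in> sets borel \<Longrightarrow> set_nn_integral lborel A r = emeasure intensity A"
    and [measurable]: "B \<in> sets borel" and "B \<subseteq> {0<..<1}"
    and infinite: "set_nn_integral lborel B r = \<infinity>"
  shows "AE \<omega> in M. infinite (B \<inter> points \<omega>)"
proof (cases "emeasure lborel (B \<inter> {x. r x = \<infinity>}) = 0")
  case False
  have "AE \<omega> in M. infinite (B \<inter> {x. r x = \<infinity>} \<inter> points \<omega>)"
  proof (rule AE_infinite_if_intensity_infinite_on_positive_subsets)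
    fix A' assume "A' \<in> sets borel" "A' \<subseteq> B \<inter> {x. r x = \<infinity>}" "0 < emeasure lborel A'"
    then have "set_nn_integral lborel A' r = \<infinity>"
      by (intro set_nn_integral_eq_infinity) auto
    then show "emeasure intensity A' = \<infinity>"
      using density \<open>A' \<in> sets borel\<close> by simp
  qed (use False \<open>B \<subseteq> {0<..<1}\<close> in \<open>auto simp: zero_less_iff_neq_zero\<close>)
  then show ?thesis
    by eventually_elim (erule infinite_super[rotated], blast)
next
  case True
  show ?thesis
  proof (rule AE_infinite_if_finite_intensity_subsets_unbounded[of B "\<lambda>n. B \<inter> {x. r x \<le> of_nat n}"])
    show "emeasure intensity (B \<inter> {x. r x \<le> of_nat n}) < \<infinity>" for n
    proof -
      have "emeasure intensity (B \<inter> {x. r x \<le> of_nat n}) \<le> of_nat n * emeasure lborel (B \<inter> {x. r x \<le> of_nat n})"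
        by (subst density[symmetric]) (auto intro: set_nn_integral_le_const_mult_emeasure)
      also have "\<dots> \<le> of_nat n * emeasure lborel {0<..<1::real}"
        using \<open>B \<subseteq> {0<..<1}\<close> by (intro mult_left_mono emeasure_mono) auto
      finally have "emeasure intensity (B \<inter> {x. r x \<le> of_nat n}) \<le> of_nat n"
        by simp
      then show ?thesis
        using of_nat_less_top[of n] by (auto intro: le_less_trans)
    qed
    show "(SUP n. emeasure intensity (B \<inter> {x. r x \<le> of_nat n})) = \<infinity>"
      using SUP_intensity_Int_le_eq[OF _ _ True] infinite by (simp add: density)
  qed auto
qed

end

theorem proposition4p4:
  fixes M :: "'a measure" and X :: "nat \<Rightarrow> 'a \<Rightarrow> real"
  assumes "prob_space M"
    and "\<And>k. X k \<in> borel_measurable M"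
    and "\<And>k \<omega>. \<omega> \<in> space M \<Longrightarrow> X k \<omega> \<in> {0<..<1}"
    and "AE \<omega> in M. {0<..<1} \<subseteq> closure (range (\<lambda>k. X k \<omega>))"
    and "independence_condition M X"
    and "\<And>B. B \<in> sets borel \<Longrightarrow> B \<subseteq> {0<..<1} \<Longrightarrow> emeasure lborel B = 0 \<Longrightarrow>
           AE \<omega> in M. B \<inter> range (\<lambda>k. X k \<omega>) = {}"
  shows "\<exists>r :: real \<Rightarrow> ennreal. r \<in> borel_measurable borel \<and>
    (\<forall>B \<in> sets borel. B \<subseteq> {0<..<1} \<longrightarrow>
       ((set_nn_integral lborel B r = \<infinity> \<longrightarrow>
           (AE \<omega> in M. infinite (B \<inter> range (\<lambda>k. X k \<omega>)))) \<and>
        (set_nn_integral lborel B r < \<infinity> \<longrightarrow>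
           (AE \<omega> in M. finite (B \<inter> range (\<lambda>k. X k \<omega>))) \<and>
           (\<forall>m::nat. measure M {\<omega> \<in> space M. card (B \<inter> range (\<lambda>k. X k \<omega>)) = m} =
              exp (- enn2real (set_nn_integral lborel B r)) *
              enn2real (set_nn_integral lborel B r) ^ m / fact m))))"
proof -
  have "random_countable_set M X"
    using assms(1-3) by (intro random_countable_set.intro random_countable_set_axioms.intro)
  then interpret poisson_rcs M X
    using assms(5,6)
    by (intro poisson_rcs.intro independent_rcs.intro diffuse_rcs.intro
        independent_rcs_axioms.intro diffuse_rcs_axioms.intro)
  obtain r where r: "r \<in> borel_measurable borel"
    and density: "\<And>A. A \<in> sets borel \<Longrightarrow> set_nn_integral lborel A r = emeasure intensity A"
    using intensity_density by metis
  have "(set_nn_integral lborel B r = \<infinity> \<longrightarrow> (AE \<omega> in M. infinite (B \<inter> points \<omega>))) \<and>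
        (set_nn_integral lborel B r < \<infinity> \<longrightarrow> (AE \<omega> in M. finite (B \<inter> points \<omega>)) \<and>
           (\<forall>m. prob {\<omega> \<in> space M. card (B \<inter> points \<omega>) = m} =
              exp (- enn2real (set_nn_integral lborel B r)) * enn2real (set_nn_integral lborel B r) ^ m / fact m))"
    if "B \<in> sets borel" "B \<subseteq> {0<..<1}" for B
    using AE_infinite_if_density_integral_infinite[OF r density that]
      poisson_card_points_if_intensity_finite[OF that(1)] density[OF that(1)]
    by simp
  with r show ?thesis
    unfolding points_def by blast
qed

end
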